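(* The two-field star-triangle map is 4D consistent in the following sense. Let $n\in\mathbb Z^4$ and let generic data $(a^{ij},c^{ij})$ be given on the six plaquettes $\sigma^{ij}(n)$, $1\le i<j\le4$. (1) If $n$ is black: in each of the four 3D cubes at $n$ (directions $i,j,k$) apply $F$ to obtain data on the plaquettes $\sigma^{ij}(n+e_k)$; then, for each $\ell$ and each triple $\{i,j,k\}$ not containing $\ell$, apply $G$ in the 3D cube at the (white) vertex $n+e_\ell$ with directions $i,j,k$ to obtain data on $\sigma^{ij}(n+e_\ell+e_k)$, $\sigma^{jk}(n+e_\ell+e_i)$, $\sigma^{ki}(n+e_\ell+e_j)$. Each plaquette $\sigma^{ij}(n+e_k+e_\ell)$ thereby receives two values, one from the cube at $n+e_\ell$ (directions $i,j,k$) and one from the cube at $n+e_k$ (directions $i,j,\ell$). Then the two $c$-values coincide and the squares of the two $a$-values coincide. (2) If $n$ is white: in each of the four 3D cubes at $n$ apply $G$ (with an arbitrary choice of the sign of $D$ in each cube) to obtain data on $\sigma^{ij}(n+e_k)$; then apply $F$ in the 3D cubes at the (black) vertices $n+e_\ell$. Then the two values of $a$ and the two values of $c$ obtained for each plaquette $\sigma^{ij}(n+e_k+e_\ell)$ coincide, for any choice of the signs.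
   Context: Vertices of $\mathbb Z^4$ with even coordinate sum are black, others white; $e_i$ are the unit vectors. A plaquette $\sigma^{ij}(m)=(m,m+e_i,m+e_i+e_j,m+e_j)$ carries numbers $a^{ij}(m),c^{ij}(m)$ with $a^{ji}=-a^{ij}$, $c^{ji}=-c^{ij}$. For a 3D cube at $m$ with directions $(i,j,k)$, the "base" data are those on $\sigma^{ij}(m),\sigma^{jk}(m),\sigma^{ki}(m)$, denoted $(a^{ij},c^{ij}),(a^{jk},c^{jk}),(a^{ki},c^{ki})$, and the "far" data are those on $\sigma^{ij}(m+e_k),\sigma^{jk}(m+e_i),\sigma^{ki}(m+e_j)$, denoted $(a^{ij}_k,c^{ij}_k),(a^{jk}_i,c^{jk}_i),(a^{ki}_j,c^{ki}_j)$. The two-field star-triangle map $F$ (far in terms of base) is $$a^{ij}_k=\frac{a^{jk}a^{ki}}{c^{ij}+c^{jk}+c^{ki}},\qquad c^{ij}_k=\frac12\left(c^{jk}+c^{ki}-c^{ij}-\frac{(a^{jk})^2+(a^{ki})^2-(a^{ij})^2}{c^{ij}+c^{jk}+c^{ki}}\right)$$ and cyclically; these formulas are compatible with reordering of $(i,j,k)$. Its (two-valued) inverse $G$ (base in terms of far) is $$c^{ij}=c^{jk}_i+c^{ki}_j+\frac{a^{jk}_ia^{ki}_j}{a^{ij}_k},\qquad a^{ij}=\frac{D}{a^{ij}_k},\ a^{jk}=\frac{D}{a^{jk}_i},\ a^{ki}=\frac{D}{a^{ki}_j},$$ where $D$ is either square root of $D^2=(a^{ij}_ka^{jk}_i)^2+(a^{jk}_ia^{ki}_j)^2+(a^{ki}_ja^{ij}_k)^2+2a^{ij}_ka^{jk}_ia^{ki}_j(c^{ij}_k+c^{jk}_i+c^{ki}_j)$.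 In the procedures of the claim, $F$ or $G$ "applied in the cube at $m$" computes the far data of that cube from its base data. *)

theory Defs
  imports Main
begin

text \<open>Directions are 0,1,2,3 (standing for e_1,...,e_4). Data on the plaquettes
  sigma^{ij}(m) of a fixed vertex m are functions a c :: nat => nat => 'a, where
  a i j = a^{ij}(m); they are antisymmetric on distinct directions.\<close>

definition antisym_data :: "(nat \<Rightarrow> nat \<Rightarrow> 'a::ab_group_add) \<Rightarrow> bool" where
  "antisym_data a \<longleftrightarrow> (\<forall>i<4. \<forall>j<4. i \<noteq> j \<longrightarrow> a j i = - a i j)"

definition distinct3 :: "nat \<Rightarrow> nat \<Rightarrow> nat \<Rightarrow> bool" where
  "distinct3 i j k \<longleftrightarrow> i < 4 \<and> j < 4 \<and> k < 4 \<and> i \<noteq> j \<and> j \<noteq> k \<and> i \<noteq> k"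

definition csum :: "(nat \<Rightarrow> nat \<Rightarrow> 'a::field) \<Rightarrow> nat \<Rightarrow> nat \<Rightarrow> nat \<Rightarrow> 'a" where
  "csum c i j k = c i j + c j k + c k i"

text \<open>Map F in the cube with directions (i,j,k): far data a^{ij}_k, c^{ij}_k
  on sigma^{ij}(m+e_k) from the base data a, c at m.\<close>

definition Fa :: "(nat \<Rightarrow> nat \<Rightarrow> 'a::field) \<Rightarrow> (nat \<Rightarrow> nat \<Rightarrow> 'a) \<Rightarrow> nat \<Rightarrow> nat \<Rightarrow> nat \<Rightarrow> 'a" where
  "Fa a c i j k = a j k * a k i / csum c i j k"

definition Fc :: "(nat \<Rightarrow> nat \<Rightarrow> 'a::field) \<Rightarrow> (nat \<Rightarrow> nat \<Rightarrow> 'a) \<Rightarrow> nat \<Rightarrow> nat \<Rightarrow> nat \<Rightarrow> 'a" where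
  "Fc a c i j k = (c j k + c k i - c i j
      - ((a j k)\<^sup>2 + (a k i)\<^sup>2 - (a i j)\<^sup>2) / csum c i j k) / 2"

text \<open>Map G applied in the cube with directions (i,j,k): the known data of the cube
  (on sigma^{ij}(m), sigma^{jk}(m), sigma^{ki}(m)) are inserted in the places of the
  variables a^{ij}_k, a^{jk}_i, a^{ki}_j (resp. c's) of the formulas for G, and the
  result is put on sigma^{ij}(m+e_k) etc.  D is the chosen square root of GD2.\<close>

definition GD2 :: "(nat \<Rightarrow> nat \<Rightarrow> 'a::field) \<Rightarrow> (nat \<Rightarrow> nat \<Rightarrow> 'a) \<Rightarrow> nat \<Rightarrow> nat \<Rightarrow> nat \<Rightarrow> 'a" where
  "GD2 a c i j k = (a i j * a j k)\<^sup>2 + (a j k * a k i)\<^sup>2 + (a k i * a i j)\<^sup>2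
      + 2 * a i j * a j k * a k i * (c i j + c j k + c k i)"

definition Gc :: "(nat \<Rightarrow> nat \<Rightarrow> 'a::field) \<Rightarrow> (nat \<Rightarrow> nat \<Rightarrow> 'a) \<Rightarrow> nat \<Rightarrow> nat \<Rightarrow> nat \<Rightarrow> 'a" where
  "Gc a c i j k = c j k + c k i + a j k * a k i / a i j"

definition Ga :: "'a::field \<Rightarrow> (nat \<Rightarrow> nat \<Rightarrow> 'a) \<Rightarrow> nat \<Rightarrow> nat \<Rightarrow> 'a" where
  "Ga D a i j = D / a i j"

end

theory Submission
  imports Defs
begin

text \<open>Everything is a rational identity in the data on the six plaquettes at \<open>n\<close>, and in
  each comparison one side is obtained from the other by exchanging the last two directions
  \<open>k\<close> and \<open>l\<close>; so it suffices to bring one side into a form that is visibly invariant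
  under \<open>k \<leftrightarrow> l\<close>.
  At a black vertex the sums \<open>S\<^sub>p\<^sub>q\<^sub>r = c\<^sup>p\<^sup>q + c\<^sup>q\<^sup>r + c\<^sup>r\<^sup>p\<close> are oriented face values of the
  tetrahedron \<open>{i, j, k, l}\<close> and satisfy the cocycle relation
  \<open>S\<^sub>j\<^sub>k\<^sub>l - S\<^sub>i\<^sub>k\<^sub>l + S\<^sub>i\<^sub>j\<^sub>l - S\<^sub>i\<^sub>j\<^sub>k = 0\<close>. The two \<open>c\<close>-values differ by a multiple of
  this relation, and with its help \<open>D\<^sup>2 / (a\<^sup>i\<^sup>j\<^sub>l)\<^sup>2\<close> takes an invariant form.
  At a white vertex the denominator of \<open>F\<close> in the cube at \<open>n + e\<^sub>l\<close>, rescaled by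
  \<open>b\<^sup>j\<^sup>k b\<^sup>k\<^sup>i\<close>, is invariant under \<open>k \<leftrightarrow> l\<close>, and so are the numerators of both
  \<open>F\<close>-values after the same rescaling.\<close>

lemma antisym_dataD:
  assumes "antisym_data a" "p < 4" "q < 4" "p \<noteq> q"
  shows "a q p = - a p q"
  using assms unfolding antisym_data_def by blast

lemma GD2_div_square:
  fixes A C :: "nat \<Rightarrow> nat \<Rightarrow> 'a::field"
  assumes "A i j \<noteq> 0"
  shows "GD2 A C i j k / (A i j)\<^sup>2 = (A j k)\<^sup>2 + (A k i)\<^sup>2
    + (A j k * A k i / A i j)\<^sup>2 + 2 * (A j k * A k i / A i j) * csum C i j k"
  using assms unfolding GD2_def csum_def by (simp add: field_simps power2_eq_square)

lemma scaled_fractions_eq: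
  fixes n1 n2 q1 q2 x y :: "'a::field"
  assumes "x * n1 = y * n2" "x * q1 = y * q2" "x \<noteq> 0" "y \<noteq> 0"
  shows "n1 / q1 = n2 / q2"
proof -
  have "n1 / q1 = (x * n1) / (x * q1)" using assms(3) by simp
  also have "\<dots> = n2 / q2" unfolding assms(1,2) using assms(4) by simp
  finally show ?thesis .
qed

locale four_directions =
  fixes i j k l :: nat
  assumes ijk: "distinct3 i j k" and l_less: "l < 4" and l_notin: "l \<notin> {i, j, k}"
begin

lemma swap_last: "four_directions i j l k"
  using ijk l_less l_notin unfolding four_directions_def distinct3_def by auto

lemma antisym_swaps:
  assumes "antisym_data a"
  shows "a j i = - a i j" "a k i = - a i k" "a l i = - a i l"
    "a k j = - a j k" "a l j = - a j l" "a l k = - a k l"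
  using ijk l_less l_notin by (auto simp: distinct3_def intro!: antisym_dataD[OF assms])

lemma nonzero_pairs:
  assumes "\<forall>p<4. \<forall>q<4. p \<noteq> q \<longrightarrow> a p q \<noteq> (0::'a::zero)"
  shows "a i j \<noteq> 0" "a i k \<noteq> 0" "a i l \<noteq> 0" "a j k \<noteq> 0" "a j l \<noteq> 0" "a k l \<noteq> 0"
  using assms ijk l_less l_notin by (auto simp: distinct3_def)

lemma csum_orientation:
  fixes c :: "nat \<Rightarrow> nat \<Rightarrow> 'a::field"
  assumes "antisym_data c"
  shows "csum c j l k = - csum c j k l" "csum c l i k = - csum c k i l"
    "csum c i k l = - csum c k i l"
  using antisym_swaps[OF assms] unfolding csum_def by simp_all

lemma csum_cocycle:
  fixes c :: "nat \<Rightarrow> nat \<Rightarrow> 'a::field"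
  assumes "antisym_data c"
  shows "csum c j k l - csum c i k l + csum c i j l - csum c i j k = 0"
  using antisym_swaps[OF assms] unfolding csum_def by simp

end

locale black_vertex = four_directions +
  fixes a c :: "nat \<Rightarrow> nat \<Rightarrow> 'a::field_char_0"
  assumes a_antisym: "antisym_data a" and c_antisym: "antisym_data c"
    and a_nonzero: "\<forall>p<4. \<forall>q<4. p \<noteq> q \<longrightarrow> a p q \<noteq> 0"
    and csum_nonzero: "\<forall>p q r. distinct3 p q r \<longrightarrow> csum c p q r \<noteq> 0"
begin

lemmas a_swaps = antisym_swaps[OF a_antisym]
lemmas c_swaps = antisym_swaps[OF c_antisym]
lemmas a_nonzeros = nonzero_pairs[OF a_nonzero]

lemma swap_last_black: "black_vertex i j l k a c"
  using swap_last a_antisym c_antisym a_nonzero csum_nonzero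
  unfolding black_vertex_def black_vertex_axioms_def by blast

lemma csum_nonzeros:
  "csum c j k l \<noteq> 0" "csum c k i l \<noteq> 0" "csum c i j l \<noteq> 0" "csum c i j k \<noteq> 0"
  using csum_nonzero ijk l_less l_notin unfolding distinct3_def by auto

lemma Fa_ij_nonzero: "Fa a c i j l \<noteq> 0"
  using a_nonzeros csum_nonzeros unfolding Fa_def a_swaps by simp

lemma csum_Fc:
  "csum (\<lambda>p q. Fc a c p q l) i j k = - (csum c i j k
     + ((a j l)\<^sup>2 + (a i l)\<^sup>2 - (a i j)\<^sup>2) / csum c i j l
     + ((a k l)\<^sup>2 + (a j l)\<^sup>2 - (a j k)\<^sup>2) / csum c j k l
     + ((a i l)\<^sup>2 + (a k l)\<^sup>2 - (a i k)\<^sup>2) / csum c k i l) / 2"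
  unfolding csum_def Fc_def a_swaps c_swaps by (simp add: field_simps)

lemma Fa_ratio:
  "Fa a c j k l * Fa a c k i l / Fa a c i j l
   = - (a k l)\<^sup>2 * csum c i j l / (csum c j k l * csum c k i l)"
  using a_nonzeros csum_nonzeros unfolding Fa_def a_swaps csum_orientation[OF c_antisym]
  by (simp add: field_simps power2_eq_square)

lemma Gc_after_F_diff:
  "Gc (\<lambda>p q. Fa a c p q l) (\<lambda>p q. Fc a c p q l) i j k
     - Gc (\<lambda>p q. Fa a c p q k) (\<lambda>p q. Fc a c p q k) i j l
   = - (a k l)\<^sup>2 * (csum c j k l - csum c i k l + csum c i j l - csum c i j k)
       / (csum c j k l * csum c k i l)"
  using a_nonzeros csum_nonzeros
  unfolding Gc_def Fa_def Fc_def csum_orientation[OF c_antisym] a_swaps c_swaps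
  by (simp add: field_simps power2_eq_square)

theorem Gc_after_F_commute:
  "Gc (\<lambda>p q. Fa a c p q l) (\<lambda>p q. Fc a c p q l) i j k
   = Gc (\<lambda>p q. Fa a c p q k) (\<lambda>p q. Fc a c p q k) i j l"
  using Gc_after_F_diff unfolding csum_cocycle[OF c_antisym] by simp

lemma GD2_after_F:
  "GD2 (\<lambda>p q. Fa a c p q l) (\<lambda>p q. Fc a c p q l) i j k / (Fa a c i j l)\<^sup>2
   = (a k l)\<^sup>2 * (csum c i j k * ((a i l)\<^sup>2 * csum c j k l + (a j l)\<^sup>2 * csum c k i l
                                  + (a k l)\<^sup>2 * csum c i j l)
       + csum c i j k * csum c i j l * csum c j k l * csum c k i l
       - (a i j)\<^sup>2 * csum c j k l * csum c k i l - (a j k)\<^sup>2 * csum c k i l * csum c i j l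
       - (a i k)\<^sup>2 * csum c j k l * csum c i j l)
     / (csum c j k l * csum c k i l)\<^sup>2"
proof -
  have cocycle: "csum c i j k = csum c j k l + csum c k i l + csum c i j l"
    using csum_cocycle[OF c_antisym] csum_orientation[OF c_antisym] by (simp add: algebra_simps)
  show ?thesis
    using a_nonzeros csum_nonzeros
    unfolding GD2_div_square[of "\<lambda>p q. Fa a c p q l" i j, OF Fa_ij_nonzero] Fa_ratio csum_Fc
    unfolding Fa_def a_swaps cocycle
    by (simp add: field_simps power2_eq_square)
qed

theorem GD2_after_F_commute:
  "GD2 (\<lambda>p q. Fa a c p q l) (\<lambda>p q. Fc a c p q l) i j k / (Fa a c i j l)\<^sup>2
   = GD2 (\<lambda>p q. Fa a c p q k) (\<lambda>p q. Fc a c p q k) i j l / (Fa a c i j k)\<^sup>2"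
  unfolding GD2_after_F black_vertex.GD2_after_F[OF swap_last_black]
    csum_orientation[OF c_antisym] a_swaps
  by (simp add: algebra_simps power2_eq_square)

theorem Ga_square_after_F_commute:
  assumes "D\<^sub>l\<^sup>2 = GD2 (\<lambda>p q. Fa a c p q l) (\<lambda>p q. Fc a c p q l) i j k"
    and "D\<^sub>k\<^sup>2 = GD2 (\<lambda>p q. Fa a c p q k) (\<lambda>p q. Fc a c p q k) i j l"
  shows "(Ga D\<^sub>l (\<lambda>p q. Fa a c p q l) i j)\<^sup>2 = (Ga D\<^sub>k (\<lambda>p q. Fa a c p q k) i j)\<^sup>2"
  unfolding Ga_def power_divide assms by (rule GD2_after_F_commute)

end

(* The theorem also assumes D {p, q, r} \<noteq> 0. *)
locale white_vertex = four_directions +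
  fixes b d :: "nat \<Rightarrow> nat \<Rightarrow> 'a::field_char_0" and D :: "nat set \<Rightarrow> 'a"
  assumes b_antisym: "antisym_data b" and d_antisym: "antisym_data d"
    and b_nonzero: "\<forall>p<4. \<forall>q<4. p \<noteq> q \<longrightarrow> b p q \<noteq> 0"
    and D_square: "\<forall>p q r. distinct3 p q r \<longrightarrow> (D {p, q, r})\<^sup>2 = GD2 b d p q r"
    and csum_Gc_nonzero: "\<forall>m p q r. distinct3 p q r \<and> m < 4 \<and> m \<notin> {p, q, r} \<longrightarrow>
      csum (\<lambda>x y. Gc b d x y m) p q r \<noteq> 0"
begin

lemmas b_swaps = antisym_swaps[OF b_antisym]
lemmas d_swaps = antisym_swaps[OF d_antisym]
lemmas b_nonzeros = nonzero_pairs[OF b_nonzero]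

lemma swap_last_white: "white_vertex i j l k b d D"
  using swap_last b_antisym d_antisym b_nonzero D_square csum_Gc_nonzero
  unfolding white_vertex_def white_vertex_axioms_def by blast

lemma D_squares:
  "(D {j, k, l})\<^sup>2 = GD2 b d j k l" "(D {k, i, l})\<^sup>2 = GD2 b d k i l" "(D {i, j, l})\<^sup>2 = GD2 b d i j l"
  using D_square ijk l_less l_notin unfolding distinct3_def by auto

lemma csum_Gc:
  "csum (\<lambda>p q. Gc b d p q l) i j k = b k l * b l j / b j k + b i l * b l k / b k i + b j l * b l i / b i j"
  unfolding csum_def Gc_def d_swaps by (simp add: algebra_simps)

lemma csum_Gc_nonzero_ijk: "b k l * b l j / b j k + b i l * b l k / b k i + b j l * b l i / b i j \<noteq> 0"
  using csum_Gc_nonzero ijk l_less l_notin unfolding csum_Gc[symmetric] by blast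

lemma scaled_csum_Gc_swap:
  "b j k * b k i * csum (\<lambda>p q. Gc b d p q l) i j k = b j l * b l i * csum (\<lambda>p q. Gc b d p q k) i j l"
  using b_nonzeros
  unfolding csum_Gc white_vertex.csum_Gc[OF swap_last_white] b_swaps
  by (simp add: field_simps)

theorem Fa_after_G_commute:
  "Fa (\<lambda>p q. Ga (D {p, q, l}) b p q) (\<lambda>p q. Gc b d p q l) i j k
   = Fa (\<lambda>p q. Ga (D {p, q, k}) b p q) (\<lambda>p q. Gc b d p q k) i j l"
proof -
  have "{j, l, k} = {j, k, l}" "{l, i, k} = {k, i, l}" by auto
  then show ?thesis
    using scaled_csum_Gc_swap unfolding Fa_def Ga_def
    by (simp add: divide_divide_eq_left mult.commute)
qed

lemma Fc_after_G:
  "Fc (\<lambda>p q. Ga (D {p, q, l}) b p q) (\<lambda>p q. Gc b d p q l) i j k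
   = (b k l * b l j / b j k * (d k j + d i l + d l k) + b i l * b l k / b k i * (d i k + d k l + d l j)
      + b j l * b l i / b i j * d i j + (b k l * b l j / b j k) * (b i l * b l k / b k i) - (b k l)\<^sup>2)
     / csum (\<lambda>p q. Gc b d p q l) i j k"
proof -
  define y1 y2 y3
    where "y1 = b k l * b l j / b j k" and "y2 = b i l * b l k / b k i" and "y3 = b j l * b l i / b i j"
  have nz: "b j k \<noteq> 0" "b k i \<noteq> 0" "b i j \<noteq> 0"
    using b_nonzeros b_swaps by auto
  \<comment> \<open>Eliminating \<open>y3\<close> leaves the denominator as an atom whose nonvanishing is known.\<close>
  have y3: "y3 = csum (\<lambda>p q. Gc b d p q l) i j k - y1 - y2"
    unfolding csum_Gc y1_def y2_def y3_def by simp
  have c_part: "Gc b d j k l + Gc b d k i l - Gc b d i j l = 2 * (d i l - d j l) + y1 + y2 - y3"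
    unfolding Gc_def y1_def y2_def y3_def d_swaps by simp
  have a_part: "GD2 b d j k l / (b j k)\<^sup>2 + GD2 b d k i l / (b k i)\<^sup>2 - GD2 b d i j l / (b i j)\<^sup>2
    = 2 * (b k l)\<^sup>2 + y1\<^sup>2 + y2\<^sup>2 - y3\<^sup>2
      + 2 * (y1 * csum d j k l + y2 * csum d k i l - y3 * csum d i j l)"
    unfolding GD2_div_square[of b j k, OF nz(1)] GD2_div_square[of b k i, OF nz(2)]
      GD2_div_square[of b i j, OF nz(3)]
    unfolding y1_def y2_def y3_def b_swaps
    by (simp add: algebra_simps power2_eq_square)
  show ?thesis
    using csum_Gc_nonzero_ijk
    unfolding Fc_def Ga_def power_divide D_squares
    unfolding c_part a_part y1_def[symmetric] y2_def[symmetric] y3_def[symmetric] csum_Gc[symmetric]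
    unfolding y3 csum_def[of d] d_swaps
    by (simp add: field_simps power2_eq_square)
qed

theorem Fc_after_G_commute:
  "Fc (\<lambda>p q. Ga (D {p, q, l}) b p q) (\<lambda>p q. Gc b d p q l) i j k
   = Fc (\<lambda>p q. Ga (D {p, q, k}) b p q) (\<lambda>p q. Gc b d p q k) i j l"
  unfolding Fc_after_G white_vertex.Fc_after_G[OF swap_last_white]
proof (rule scaled_fractions_eq[OF _ scaled_csum_Gc_swap])
  show "b j k * b k i \<noteq> 0" "b j l * b l i \<noteq> 0"
    using b_nonzeros b_swaps by auto
qed (use b_nonzeros in \<open>simp add: b_swaps d_swaps field_simps power2_eq_square\<close>)

end

theorem theorem10:
  fixes a0 c0 :: "nat \<Rightarrow> nat \<Rightarrow> 'a::field_char_0"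
    and D1 :: "nat \<Rightarrow> nat set \<Rightarrow> 'a"
    and b0 d0 :: "nat \<Rightarrow> nat \<Rightarrow> 'a::field_char_0"
    and D0 :: "nat set \<Rightarrow> 'a"
  shows
  \<comment> \<open>(1) n black: F at n, then G at the white vertices n+e_l (cube directions i,j,k,
      sign of D chosen arbitrarily as D1 l {i,j,k})\<close>
  "((antisym_data a0 \<and> antisym_data c0
     \<and> (\<forall>i<4. \<forall>j<4. i \<noteq> j \<longrightarrow> a0 i j \<noteq> 0)
     \<and> (\<forall>i j k. distinct3 i j k \<longrightarrow> csum c0 i j k \<noteq> 0)
     \<and> (\<forall>l i j k. distinct3 i j k \<and> l < 4 \<and> l \<notin> {i, j, k} \<longrightarrow>
          (D1 l {i, j, k})\<^sup>2 = GD2 (\<lambda>p q. Fa a0 c0 p q l) (\<lambda>p q. Fc a0 c0 p q l) i j k))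
   \<longrightarrow> (\<forall>i j k l. distinct3 i j k \<and> l < 4 \<and> l \<notin> {i, j, k} \<longrightarrow>
          Gc (\<lambda>p q. Fa a0 c0 p q l) (\<lambda>p q. Fc a0 c0 p q l) i j k
            = Gc (\<lambda>p q. Fa a0 c0 p q k) (\<lambda>p q. Fc a0 c0 p q k) i j l
        \<and> (Ga (D1 l {i, j, k}) (\<lambda>p q. Fa a0 c0 p q l) i j)\<^sup>2
            = (Ga (D1 k {i, j, l}) (\<lambda>p q. Fa a0 c0 p q k) i j)\<^sup>2))
   \<and>
  \<comment> \<open>(2) n white: G at n (signs D0 {i,j,k} arbitrary), then F at the black vertices n+e_l\<close>
  ((antisym_data b0 \<and> antisym_data d0
     \<and> (\<forall>i<4. \<forall>j<4. i \<noteq> j \<longrightarrow> b0 i j \<noteq> 0)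
     \<and> (\<forall>i j k. distinct3 i j k \<longrightarrow> (D0 {i, j, k})\<^sup>2 = GD2 b0 d0 i j k \<and> D0 {i, j, k} \<noteq> 0)
     \<and> (\<forall>l i j k. distinct3 i j k \<and> l < 4 \<and> l \<notin> {i, j, k} \<longrightarrow>
          csum (\<lambda>p q. Gc b0 d0 p q l) i j k \<noteq> 0))
   \<longrightarrow> (\<forall>i j k l. distinct3 i j k \<and> l < 4 \<and> l \<notin> {i, j, k} \<longrightarrow>
          Fa (\<lambda>p q. Ga (D0 {p, q, l}) b0 p q) (\<lambda>p q. Gc b0 d0 p q l) i j k
            = Fa (\<lambda>p q. Ga (D0 {p, q, k}) b0 p q) (\<lambda>p q. Gc b0 d0 p q k) i j l
        \<and> Fc (\<lambda>p q. Ga (D0 {p, q, l}) b0 p q) (\<lambda>p q. Gc b0 d0 p q l) i j k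
            = Fc (\<lambda>p q. Ga (D0 {p, q, k}) b0 p q) (\<lambda>p q. Gc b0 d0 p q k) i j l))"
proof (intro conjI impI allI, goal_cases)
  case (1 i j k l)
  then interpret black_vertex i j k l a0 c0 by unfold_locales auto
  show ?case by (rule Gc_after_F_commute)
next
  case (2 i j k l)
  then interpret black_vertex i j k l a0 c0 by unfold_locales auto
  show ?case
    using 2 swap_last unfolding four_directions_def
    by (intro Ga_square_after_F_commute) blast+
next
  case (3 i j k l)
  then interpret white_vertex i j k l b0 d0 D0 by unfold_locales auto
  show ?case by (rule Fa_after_G_commute)
next
  case (4 i j k l)
  then interpret white_vertex i j k l b0 d0 D0 by unfold_locales auto
  show ?case by (rule Fc_after_G_commute)
qed

end
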